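(* Let $n$ be even and $F\colon\mathbb F_2^n\to\mathbb F_2^n$ a quadratic APN function with associated $\mathcal V_F=\{V_b\colon b\in\mathbb F_2^n\setminus\{0\},\ \dim(V_b)\ge1\}$. Then $\dim(V_b)$ is even for every $V_b\in\mathcal V_F$.
   Context: $\langle\cdot,\cdot\rangle$ is the standard dot product. $F$ is APN if for every $a\ne0$ and $c$, $F(x)+F(x+a)=c$ has at most 2 solutions; quadratic if each component $x\mapsto\langle b,F(x)\rangle$ is a quadratic form plus an affine function. With $D_{F,a}(x)=F(x)+F(x+a)$, $H_b=\{x:\langle b,x\rangle=0\}$, $\overline{H_b}=\{x:\langle b,x\rangle=1\}$: $T_b=\{a:\mathrm{Im}(D_{F,a})=H_b\}\cup\{0\}$, $\overline{T_b}=\{a:\mathrm{Im}(D_{F,a})=\overline{H_b}\}$, $V_b=T_b\cup\overline{T_b}$ (a linear subspace). *)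

theory Defs
  imports "HOL-Analysis.Analysis" "HOL-Library.Z2"
begin

text \<open>Vectors of F_2^n are modelled as \<open>bit ^ 'n\<close>, with n = CARD('n).\<close>

definition dotp :: "bit ^ 'n \<Rightarrow> bit ^ 'n \<Rightarrow> bit" where
  "dotp u v = (\<Sum>i\<in>UNIV. u $ i * v $ i)"

definition is_APN :: "(bit ^ 'n \<Rightarrow> bit ^ 'n) \<Rightarrow> bool" where
  "is_APN F \<longleftrightarrow> (\<forall>a c. a \<noteq> 0 \<longrightarrow> card {x. F x + F (x + a) = c} \<le> 2)"

definition is_quadratic :: "(bit ^ 'n \<Rightarrow> bit ^ 'n) \<Rightarrow> bool" where
  "is_quadratic F \<longleftrightarrow> (\<forall>b. \<exists>(Q :: 'n \<Rightarrow> 'n \<Rightarrow> bit) (l :: 'n \<Rightarrow> bit) (c :: bit).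
      \<forall>x. dotp b (F x) = (\<Sum>i\<in>UNIV. \<Sum>j\<in>UNIV. Q i j * x $ i * x $ j)
                         + (\<Sum>i\<in>UNIV. l i * x $ i) + c)"

definition Dder :: "(bit ^ 'n \<Rightarrow> bit ^ 'n) \<Rightarrow> bit ^ 'n \<Rightarrow> bit ^ 'n \<Rightarrow> bit ^ 'n" where
  "Dder F a x = F x + F (x + a)"

definition Hyp :: "bit ^ 'n \<Rightarrow> (bit ^ 'n) set" where
  "Hyp b = {x. dotp b x = 0}"

definition Hypbar :: "bit ^ 'n \<Rightarrow> (bit ^ 'n) set" where
  "Hypbar b = {x. dotp b x = 1}"

definition Tset :: "(bit ^ 'n \<Rightarrow> bit ^ 'n) \<Rightarrow> bit ^ 'n \<Rightarrow> (bit ^ 'n) set" where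
  "Tset F b = {a. range (Dder F a) = Hyp b} \<union> {0}"

definition Tbarset :: "(bit ^ 'n \<Rightarrow> bit ^ 'n) \<Rightarrow> bit ^ 'n \<Rightarrow> (bit ^ 'n) set" where
  "Tbarset F b = {a. range (Dder F a) = Hypbar b}"

definition Vset :: "(bit ^ 'n \<Rightarrow> bit ^ 'n) \<Rightarrow> bit ^ 'n \<Rightarrow> (bit ^ 'n) set" where
  "Vset F b = Tset F b \<union> Tbarset F b"

definition dimF2 :: "(bit ^ 'n) set \<Rightarrow> nat" where
  "dimF2 V = vector_space.dim ((*s) :: bit \<Rightarrow> bit ^ 'n \<Rightarrow> bit ^ 'n) V"

end

theory Submission
  imports Defs "HOL-Computational_Algebra.Primes"
begin

(* Write f x = <b, F x>. Its polar form B(x, y) = f(x + y) + f x + f y + f 0 is bilinear since F is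
   quadratic, and <b, D_a F x> = B(x, a) + f a + f 0. So D_a F takes values in one coset of H_b
   exactly when a lies in the radical R of B; for such a != 0 the APN property gives D_a F at least
   2^(n-1) values, so its image is that whole coset. Hence V_b = R.
   Squaring the Walsh transform gives W(w)^2 = 2^n * sum_{z in R} (-1)^(f z + f 0 + <w, z>). The
   summand is a character of R, so each inner sum is 0 or |R| = 2^dim R, and they cannot all vanish
   because their sum over w is 2^n. So 2^(n + dim R) is a square and dim R has the parity of n. *)

(* The Z2 simp rules would turn the field operations on bit into bit operations. *)
declare add_bit_eq_xor [simp del] mult_bit_eq_and [simp del]

lemma UNIV_bit: "(UNIV :: bit set) = {0, 1}"
  using bit_not_zero_iff by auto

instance bit :: finite
  by standard (simp add: UNIV_bit)

lemma CARD_bit [simp]: "CARD(bit) = 2"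
  by (simp add: UNIV_bit)

lemma bit_add_self [simp]: "(a::bit) + a = 0"
  by (cases a) simp_all

lemma ex_bit_iff: "(\<exists>e::bit. P e) \<longleftrightarrow> P 0 \<or> P 1"
  by (metis bit_not_zero_iff)

lemma bit_add_eq_iff: "(a::bit) + b = c \<longleftrightarrow> a = c + b"
  by (cases a; cases b; cases c) simp_all

lemma bit_eq_or_eq_add_one: "(a::bit) = b \<or> a = b + 1"
  by (cases a; cases b) simp_all

lemma vec_bit_add_self [simp]: "(x::bit^'n) + x = 0"
  by (simp add: vec_eq_iff)

lemma vec_bit_add_cancel_right [simp]: "(x::bit^'n) + y + y = x"
  by (simp add: add.assoc)

lemma card_span_independent:
  fixes B :: "('a::{field,finite}^'n) set"
  assumes "vec.independent B"
  shows "card (vec.span B) = CARD('a) ^ card B"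
proof -
  have fin: "finite B" and indep: "\<And>u. (\<Sum>v\<in>B. u v *s v) = 0 \<Longrightarrow> \<forall>v\<in>B. u v = 0"
    using assms vec.independent_explicit by blast+
  let ?comb = "\<lambda>u. \<Sum>v\<in>B. u v *s v"
  have "vec.span B = ?comb ` (B \<rightarrow>\<^sub>E UNIV)"
  proof
    show "vec.span B \<subseteq> ?comb ` (B \<rightarrow>\<^sub>E UNIV)"
    proof
      fix y assume "y \<in> vec.span B"
      then obtain u where "y = ?comb u" using vec.span_finite[OF fin] by auto
      also have "\<dots> = ?comb (restrict u B)" by (intro sum.cong) auto
      finally show "y \<in> ?comb ` (B \<rightarrow>\<^sub>E UNIV)"
        by (intro image_eqI[where x = "restrict u B"]) simp_all
    qed
  qed (auto simp: vec.span_finite[OF fin])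
  moreover have "inj_on ?comb (B \<rightarrow>\<^sub>E UNIV)"
  proof (rule inj_onI)
    fix u u' assume u: "u \<in> B \<rightarrow>\<^sub>E UNIV" and u': "u' \<in> B \<rightarrow>\<^sub>E UNIV" and "?comb u = ?comb u'"
    then have "(\<Sum>v\<in>B. (u v - u' v) *s v) = 0"
      by (simp add: vec.scale_left_diff_distrib sum_subtractf)
    then have "\<forall>v\<in>B. u v = u' v" using indep by fastforce
    then show "u = u'" using u u' by (auto intro: PiE_ext)
  qed
  ultimately show ?thesis
    using fin by (simp add: card_image card_PiE)
qed

lemma card_subspace:
  fixes R :: "('a::{field,finite}^'n) set"
  assumes "vec.subspace R"
  shows "card R = CARD('a) ^ vec.dim R"
proof -
  obtain B where B: "B \<subseteq> R" "vec.independent B" "R \<subseteq> vec.span B" "card B = vec.dim R"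
    using vec.basis_exists by blast
  then have "R = vec.span B"
    using vec.span_minimal[OF _ assms] by blast
  with B show ?thesis using card_span_independent[OF B(2)] by simp
qed

lemma even_exp_if_square_eq_power_two:
  assumes "(w::int)^2 = 2 ^ k"
  shows "even k"
proof -
  have "w \<noteq> 0" using assms by auto
  have "k = multiplicity 2 ((2::int) ^ k)" by simp
  also have "\<dots> = multiplicity 2 (w ^ 2)" by (simp add: assms)
  also have "\<dots> = 2 * multiplicity 2 w"
    using \<open>w \<noteq> 0\<close> by (simp add: prime_elem_multiplicity_power_distrib)
  finally show ?thesis by simp
qed

lemma dotp_add_left: "dotp (u + v) w = dotp u w + dotp v w"
  unfolding dotp_def by (simp add: distrib_right sum.distrib)

lemma dotp_add_right: "dotp u (v + w) = dotp u v + dotp u w"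
  unfolding dotp_def by (simp add: distrib_left sum.distrib)

lemma dotp_axis_left: "dotp (axis i 1) z = z $ i"
proof -
  have "dotp (axis i 1) z = (\<Sum>j\<in>UNIV. if j = i then z $ i else 0)"
    unfolding dotp_def by (rule sum.cong) (auto simp: axis_def)
  then show ?thesis by simp
qed

lemma dotp_eq_zero_for_all_iff: "(\<forall>w. dotp w z = 0) \<longleftrightarrow> z = 0"
proof
  assume z: "\<forall>w. dotp w z = 0"
  show "z = 0"
    unfolding vec_eq_iff
  proof
    show "z $ i = 0 $ i" for i using z dotp_axis_left[of i z] by simp
  qed
qed (simp add: dotp_def)

definition chi :: "bit \<Rightarrow> int" where
  "chi x = (if x = 0 then 1 else -1)"

lemma chi_add: "chi (x + y) = chi x * chi y"
  by (cases x; cases y) (simp_all add: chi_def)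

lemma chi_0 [simp]: "chi 0 = 1"
  by (simp add: chi_def)

lemma chi_add_one: "chi (x + 1) = - chi x"
  by (cases x) (simp_all add: chi_def)

lemma sum_chi_additive:
  fixes A :: "(bit^'n) set" and h :: "bit^'n \<Rightarrow> bit"
  assumes closed: "\<And>x y. x \<in> A \<Longrightarrow> y \<in> A \<Longrightarrow> x + y \<in> A"
    and additive: "\<And>x y. x \<in> A \<Longrightarrow> y \<in> A \<Longrightarrow> h (x + y) = h x + h y"
  shows "(\<Sum>x\<in>A. chi (h x)) = (if \<forall>x\<in>A. h x = 0 then int (card A) else 0)"
proof (cases "\<forall>x\<in>A. h x = 0")
  case True
  then show ?thesis by (simp add: chi_def)
next
  case False
  then obtain z where z: "z \<in> A" "h z = 1" by auto
  have "bij_betw (\<lambda>x. x + z) A A"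
    by (rule bij_betw_byWitness[where f' = "\<lambda>x. x + z"]) (auto simp: closed z)
  then have "(\<Sum>x\<in>A. chi (h x)) = (\<Sum>x\<in>A. chi (h (x + z)))"
    using sum.reindex_bij_betw[of _ A A "\<lambda>x. chi (h x)"] by simp
  also have "\<dots> = (\<Sum>x\<in>A. - chi (h x))"
    by (rule sum.cong) (simp_all add: additive z chi_add_one)
  also have "\<dots> = - (\<Sum>x\<in>A. chi (h x))"
    by (simp add: sum_negf)
  finally show ?thesis using False by auto
qed

lemma sum_chi_dotp: "(\<Sum>w\<in>UNIV. chi (dotp w z)) = (if z = 0 then 2 ^ CARD('n) else 0)"
  for z :: "bit^'n"
  by (subst sum_chi_additive) (simp_all add: dotp_add_left dotp_eq_zero_for_all_iff)

definition polar :: "(bit^'n \<Rightarrow> bit) \<Rightarrow> bit^'n \<Rightarrow> bit^'n \<Rightarrow> bit" where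
  "polar f x y = f (x + y) + f x + f y + f 0"

definition polar_radical :: "(bit^'n \<Rightarrow> bit) \<Rightarrow> (bit^'n) set" where
  "polar_radical f = {a. \<forall>x. polar f x a = 0}"

definition walsh :: "(bit^'n \<Rightarrow> bit) \<Rightarrow> bit^'n \<Rightarrow> int" where
  "walsh f w = (\<Sum>x\<in>UNIV. chi (f x + dotp w x))"

lemma polar_commute: "polar f x y = polar f y x"
  by (simp add: polar_def ac_simps)

lemma polar_zero_left [simp]: "polar f 0 y = 0"
  by (simp add: polar_def ac_simps)

lemma polar_zero_right [simp]: "polar f x 0 = 0"
  by (simp add: polar_def ac_simps)

lemma polar_eq_0_iff: "polar f x y = 0 \<longleftrightarrow> f (x + y) = f x + f y + f 0"
  unfolding polar_def
  by (cases "f (x + y)"; cases "f x"; cases "f y"; cases "f 0") simp_all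

lemma add_translate_eq_polar: "f x + f (x + y) = polar f x y + f y + f 0"
  by (simp add: polar_def ac_simps)

locale quadratic_boolean =
  fixes f :: "bit^'n \<Rightarrow> bit"
  assumes polar_add_left: "polar f (x + x') y = polar f x y + polar f x' y"
begin

lemma polar_add_right: "polar f x (y + y') = polar f x y + polar f x y'"
  by (metis polar_add_left polar_commute)

lemma add_mem_polar_radical: "x \<in> polar_radical f \<Longrightarrow> y \<in> polar_radical f \<Longrightarrow> x + y \<in> polar_radical f"
  by (simp add: polar_radical_def polar_add_right)

lemma subspace_polar_radical: "vec.subspace (polar_radical f)"
  unfolding vec.subspace_def
proof (intro conjI ballI allI)
  show "0 \<in> polar_radical f" by (simp add: polar_radical_def)
  show "x + y \<in> polar_radical f" if "x \<in> polar_radical f" "y \<in> polar_radical f" for x y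
    using that by (rule add_mem_polar_radical)
  show "c *s x \<in> polar_radical f" if "x \<in> polar_radical f" for c x
    using that by (cases c) (simp_all add: polar_radical_def)
qed

lemma sum_chi_polar:
  "(\<Sum>x\<in>UNIV. chi (polar f x z)) = (if z \<in> polar_radical f then 2 ^ CARD('n) else 0)"
  by (subst sum_chi_additive) (auto simp: polar_add_left polar_radical_def)

lemma walsh_square:
  "(walsh f w)^2 = 2 ^ CARD('n) * (\<Sum>z\<in>polar_radical f. chi (f z + f 0 + dotp w z))"
proof -
  let ?G = "\<lambda>x. f x + dotp w x"
  let ?h = "\<lambda>z. f z + f 0 + dotp w z"
  have "(walsh f w)^2 = (\<Sum>x\<in>UNIV. \<Sum>y\<in>UNIV. chi (?G x + ?G y))"
    by (simp add: walsh_def power2_eq_square sum_product chi_add)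
  also have "\<dots> = (\<Sum>x\<in>UNIV. \<Sum>z\<in>UNIV. chi (?G x + ?G (x + z)))"
    by (rule sum.cong[OF refl]) (rule sum.reindex_bij_betw[OF bij_plus, symmetric])
  also have "\<dots> = (\<Sum>x\<in>UNIV. \<Sum>z\<in>UNIV. chi (polar f x z) * chi (?h z))"
  proof (intro sum.cong refl)
    fix x z
    have "?G x + ?G (x + z) = polar f x z + ?h z"
      by (simp add: polar_def dotp_add_right ac_simps)
    then show "chi (?G x + ?G (x + z)) = chi (polar f x z) * chi (?h z)"
      by (simp only: chi_add)
  qed
  also have "\<dots> = (\<Sum>z\<in>UNIV. (\<Sum>x\<in>UNIV. chi (polar f x z)) * chi (?h z))"
    by (subst sum.swap) (simp add: sum_distrib_right)
  also have "\<dots> = (\<Sum>z\<in>UNIV. if z \<in> polar_radical f then 2 ^ CARD('n) * chi (?h z) else 0)"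
    by (intro sum.cong refl) (simp add: sum_chi_polar)
  also have "\<dots> = 2 ^ CARD('n) * (\<Sum>z\<in>polar_radical f. chi (?h z))"
    by (simp add: sum_distrib_left flip: sum.inter_restrict)
  finally show ?thesis .
qed

lemma sum_chi_polar_radical:
  "(\<Sum>z\<in>polar_radical f. chi (f z + f 0 + dotp w z)) \<in> {0, int (card (polar_radical f))}"
proof -
  have "f (x + y) + f 0 + dotp w (x + y) = (f x + f 0 + dotp w x) + (f y + f 0 + dotp w y)"
    if "y \<in> polar_radical f" for x y
  proof -
    have "f (x + y) = f x + f y + f 0"
      using that by (simp add: polar_radical_def polar_eq_0_iff)
    then show ?thesis by (simp add: dotp_add_right ac_simps)
  qed
  then show ?thesis
    by (subst sum_chi_additive) (simp_all add: add_mem_polar_radical)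
qed

lemma sum_sum_chi_polar_radical:
  "(\<Sum>w\<in>UNIV. \<Sum>z\<in>polar_radical f. chi (f z + f 0 + dotp w z)) = 2 ^ CARD('n)"
proof -
  have "0 \<in> polar_radical f" by (simp add: polar_radical_def)
  have "(\<Sum>w\<in>UNIV. \<Sum>z\<in>polar_radical f. chi (f z + f 0 + dotp w z))
      = (\<Sum>z\<in>polar_radical f. chi (f z + f 0) * (\<Sum>w\<in>UNIV. chi (dotp w z)))"
    by (subst sum.swap) (simp add: chi_add sum_distrib_left)
  also have "\<dots> = (\<Sum>z\<in>polar_radical f. if z = 0 then 2 ^ CARD('n) else 0)"
    by (intro sum.cong refl) (simp add: sum_chi_dotp)
  also have "\<dots> = 2 ^ CARD('n)"
    using \<open>0 \<in> polar_radical f\<close> by simp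
  finally show ?thesis .
qed

lemma exists_walsh_square_eq: "\<exists>w. (walsh f w)^2 = 2 ^ (CARD('n) + vec.dim (polar_radical f))"
proof -
  have "\<exists>w. (\<Sum>z\<in>polar_radical f. chi (f z + f 0 + dotp w z)) \<noteq> 0"
  proof (rule ccontr)
    assume "\<not> ?thesis"
    then have "(\<Sum>w\<in>UNIV. \<Sum>z\<in>polar_radical f. chi (f z + f 0 + dotp w z)) = 0"
      by simp
    then show False
      using sum_sum_chi_polar_radical by simp
  qed
  then obtain w where "(\<Sum>z\<in>polar_radical f. chi (f z + f 0 + dotp w z)) \<noteq> 0" ..
  then have "(\<Sum>z\<in>polar_radical f. chi (f z + f 0 + dotp w z)) = 2 ^ vec.dim (polar_radical f)"
    using sum_chi_polar_radical[of w] card_subspace[OF subspace_polar_radical] by auto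
  then show ?thesis
    using walsh_square[of w] by (auto simp: power_add)
qed

theorem even_card_add_dim_polar_radical: "even (CARD('n) + vec.dim (polar_radical f))"
  using exists_walsh_square_eq even_exp_if_square_eq_power_two by blast

end

lemma quadratic_boolean_quadratic_form:
  fixes f :: "bit^'n \<Rightarrow> bit"
  assumes f: "\<And>x. f x = (\<Sum>i\<in>UNIV. \<Sum>j\<in>UNIV. Q i j * x $ i * x $ j) + (\<Sum>i\<in>UNIV. l i * x $ i) + c"
  shows "quadratic_boolean f"
proof
  define q where "q x = (\<Sum>i\<in>UNIV. \<Sum>j\<in>UNIV. Q i j * x $ i * x $ j)" for x :: "bit^'n"
  define L where "L x = (\<Sum>i\<in>UNIV. l i * x $ i)" for x :: "bit^'n"
  define \<beta> where "\<beta> x y = (\<Sum>i\<in>UNIV. \<Sum>j\<in>UNIV. Q i j * (x $ i * y $ j + y $ i * x $ j))"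
    for x y :: "bit^'n"
  have q_add: "q (x + y) = q x + q y + \<beta> x y" for x y
    unfolding q_def \<beta>_def by (simp add: algebra_simps sum.distrib)
  have L_add: "L (x + y) = L x + L y" for x y
    unfolding L_def by (simp add: algebra_simps sum.distrib)
  have "f x = q x + L x + c" for x
    using f by (simp add: q_def L_def)
  moreover have "q 0 = 0" "L 0 = 0"
    by (simp_all add: q_def L_def)
  ultimately have polar_eq: "polar f x y = \<beta> x y" for x y
    by (simp add: polar_def q_add L_add ac_simps)
  show "polar f (x + x') y = polar f x y + polar f x' y" for x x' y
    unfolding polar_eq \<beta>_def by (simp add: algebra_simps sum.distrib)
qed

lemma dotp_Dder:
  "dotp b (Dder F a x) = polar (\<lambda>x. dotp b (F x)) x a + dotp b (F a) + dotp b (F 0)"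
  unfolding Dder_def dotp_add_right by (rule add_translate_eq_polar)

lemma card_dotp_level:
  fixes b :: "bit^'n"
  assumes "b \<noteq> 0"
  shows "2 * card {y. dotp b y = e} = 2 ^ CARD('n)"
proof -
  obtain i where "b $ i = 1" using assms by (auto simp: vec_eq_iff)
  then have "dotp b (axis i 1) = 1" by (simp add: dotp_def axis_def if_distrib cong: if_cong)
  then have "bij_betw (\<lambda>y. y + axis i 1) {y. dotp b y = e} {y. dotp b y = e + 1}"
    by (intro bij_betw_byWitness[where f' = "\<lambda>y. y + axis i 1"]) (auto simp: dotp_add_right)
  then have "card {y. dotp b y = e} = card {y. dotp b y = e + 1}"
    by (rule bij_betw_same_card)
  moreover have "{y. dotp b y = e} \<union> {y. dotp b y = e + 1} = UNIV"
    using bit_eq_or_eq_add_one by blast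
  then have "card {y. dotp b y = e} + card {y. dotp b y = e + 1} = CARD(bit^'n)"
    by (subst card_Un_disjoint[symmetric]) auto
  ultimately show ?thesis by simp
qed

lemma card_range_Dder_ge:
  fixes F :: "bit^'n \<Rightarrow> bit^'n"
  assumes "is_APN F" "a \<noteq> 0"
  shows "2 ^ CARD('n) \<le> 2 * card (range (Dder F a))"
proof -
  have "CARD(bit^'n) = card (\<Union>y\<in>range (Dder F a). {x. Dder F a x = y})"
    by (rule arg_cong[where f = card]) auto
  also have "\<dots> \<le> (\<Sum>y\<in>range (Dder F a). card {x. Dder F a x = y})"
    by (rule card_UN_le) simp
  also have "\<dots> \<le> (\<Sum>y\<in>range (Dder F a). 2)"
    by (rule sum_mono) (use assms in \<open>auto simp: is_APN_def Dder_def\<close>)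
  finally show ?thesis by simp
qed

lemma mem_Vset_iff:
  "a \<in> Vset F b \<longleftrightarrow> a = 0 \<or> (\<exists>e. range (Dder F a) = {y. dotp b y = e})"
  unfolding Vset_def Tset_def Tbarset_def Hyp_def Hypbar_def ex_bit_iff by blast

lemma Vset_eq_polar_radical:
  assumes "is_APN F" "b \<noteq> 0"
  shows "Vset F b = polar_radical (\<lambda>x. dotp b (F x))"
    (is "_ = polar_radical ?f")
proof (intro set_eqI iffI)
  fix a
  let ?e = "dotp b (F a) + dotp b (F 0)"
  assume a: "a \<in> Vset F b"
  show "a \<in> polar_radical ?f"
  proof (cases "a = 0")
    case False
    then obtain e where e: "range (Dder F a) = {y. dotp b y = e}"
      using a by (auto simp: mem_Vset_iff)
    have p: "polar ?f x a = e + ?e" for x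
    proof -
      have "dotp b (Dder F a x) = e" using e by blast
      then show ?thesis by (simp add: dotp_Dder bit_add_eq_iff)
    qed
    have "e + ?e = 0" using p[of 0] by simp
    then show ?thesis by (simp add: polar_radical_def p)
  qed (simp add: polar_radical_def)
next
  fix a
  let ?e = "dotp b (F a) + dotp b (F 0)"
  assume a: "a \<in> polar_radical ?f"
  show "a \<in> Vset F b"
  proof (cases "a = 0")
    case False
    have sub: "range (Dder F a) \<subseteq> {y. dotp b y = ?e}"
      using a by (auto simp: dotp_Dder polar_radical_def)
    moreover have "card {y. dotp b y = ?e} \<le> card (range (Dder F a))"
      using card_dotp_level[OF assms(2), of ?e] card_range_Dder_ge[OF assms(1) False] by simp
    ultimately have "range (Dder F a) = {y. dotp b y = ?e}"
      using card_mono[OF finite sub] by (intro card_subset_eq) simp_all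
    then show ?thesis by (auto simp: mem_Vset_iff)
  qed (simp add: mem_Vset_iff)
qed

theorem mainTheorem4:
  fixes F :: "bit ^ 'n \<Rightarrow> bit ^ 'n"
  assumes "even CARD('n)"
    and "is_quadratic F"
    and "is_APN F"
    and "b \<noteq> 0"
    and "dimF2 (Vset F b) \<ge> 1"
  shows "even (dimF2 (Vset F b))"
proof -
  obtain Q l c where "\<And>x. dotp b (F x) = (\<Sum>i\<in>UNIV. \<Sum>j\<in>UNIV. Q i j * x $ i * x $ j)
                         + (\<Sum>i\<in>UNIV. l i * x $ i) + c"
    using assms(2) unfolding is_quadratic_def by blast
  then interpret quadratic_boolean "\<lambda>x. dotp b (F x)"
    by (rule quadratic_boolean_quadratic_form)
  show ?thesis
    using even_card_add_dim_polar_radical assms(1)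
    unfolding dimF2_def Vset_eq_polar_radical[OF assms(3,4)] by simp
qed

end
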